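(* Let $a^*\in\mathbb{R}$, $\epsilon\ge0$ with $|a^*|-\epsilon>1$, $m\in\mathbb{N}$, $R\ge0$, $N:=2^R$. Let $\delta_+:=(|a^*|+\epsilon)^m-|a^*|^m$, $\delta_-:=|a^*|^m-(|a^*|-\epsilon)^m$, $M:=N^m$, and $$\kappa:=\frac1M\Big(|a^*|^m+\max\{\tfrac M2,1\}\delta_++\max\{\tfrac M2-1,0\}\delta_-\Big).$$ Then $\kappa^2<1$ (i.e. $\bar\kappa<1$ in the lossless case $p=0$) if and only if $$\frac{\delta_++\delta_-}{2}<1\quad\text{and}\quad R>\max\Big\{\log_2(|a^*|+\epsilon),\ \frac1m\log_2\frac{|a^*|^m-\delta_-}{1-(\delta_++\delta_-)/2}\Big\}.$$
   Context: In particular, if $m$ is so large that $(\delta_++\delta_-)/2\ge1$, no data rate $R$ achieves $\kappa<1$. *)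

theory Defs
  imports Complex_Main
begin

definition delta_plus :: "real \<Rightarrow> real \<Rightarrow> nat \<Rightarrow> real" where
  "delta_plus a e m = (\<bar>a\<bar> + e) ^ m - \<bar>a\<bar> ^ m"

definition delta_minus :: "real \<Rightarrow> real \<Rightarrow> nat \<Rightarrow> real" where
  "delta_minus a e m = \<bar>a\<bar> ^ m - (\<bar>a\<bar> - e) ^ m"

definition kappa :: "real \<Rightarrow> real \<Rightarrow> nat \<Rightarrow> real \<Rightarrow> real" where
  "kappa a e m R =
     (let M = (2 powr R) ^ m
      in (1 / M) * (\<bar>a\<bar> ^ m + max (M / 2) 1 * delta_plus a e m
                    + max (M / 2 - 1) 0 * delta_minus a e m))"

end

theory Submission
  imports Defs
begin

(* Write b = |a|-e, c = |a|+e and M = (2 powr R)^m >= 1, so that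
   delta_plus = c^m - |a|^m and delta_minus = |a|^m - b^m.  The two max-terms
   in kappa switch at M = 2, and in both regimes kappa collapses:
     kappa = b^m/M + (c^m-b^m)/2   if M >= 2,      kappa = c^m/M   if M < 2.
   The file first proves this piecewise formula for arbitrary reals, then shows
   that the piecewise expression is < 1 exactly when
     (c^m-b^m)/2 < 1,  c^m < M  and  b^m/(1-(c^m-b^m)/2) < M,
   and finally translates the two bounds on M into the logarithmic thresholds on
   R of the statement.  Since kappa >= 0, kappa^2 < 1 is the same as kappa < 1. *)

text \<open>The two max-weights of kappa switch at M = 2; in each regime the
  contribution of the middle value A cancels.\<close>
lemma kappa_shape_piecewise:
  fixes M A B C :: real
  assumes "M \<ge> 1"
  shows "(1 / M) * (A + max (M / 2) 1 * (C - A) + max (M / 2 - 1) 0 * (A - B))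
         = (if 2 \<le> M then B / M + (C - B) / 2 else C / M)"
  using assms by (cases "2 \<le> M") (simp_all add: max_def field_simps)

text \<open>When the piecewise expression is below 1, in terms of three explicit
  bounds on M; each regime yields the bound that is missing in it for free.\<close>
lemma piecewise_less_one_iff:
  fixes M B C :: real
  assumes B: "0 < B" "B \<le> C" and M: "1 \<le> M"
  shows "(if 2 \<le> M then B / M + (C - B) / 2 else C / M) < 1
         \<longleftrightarrow> (C - B) / 2 < 1 \<and> C < M \<and> B / (1 - (C - B) / 2) < M"
proof -
  define D where "D = (C - B) / 2"
  have D0: "0 \<le> D" using B by (simp add: D_def)
  have bound_iff: "B / (1 - D) < M \<longleftrightarrow> B < M * (1 - D)" if "D < 1"
    using that by (simp add: pos_divide_less_eq mult.commute)
  show ?thesis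
  proof (cases "2 \<le> M")
    case True
    have "0 < B / M" using B M by simp
    moreover have "B / M + D < 1 \<longleftrightarrow> B < M * (1 - D)"
      using M by (simp add: field_simps)
    ultimately have "B / M + D < 1 \<longleftrightarrow> D < 1 \<and> B < M * (1 - D)"
      by auto
    moreover have "B < M * (1 - D) \<Longrightarrow> C < M"
    proof -
      assume "B < M * (1 - D)"
      then have "B < M - M * D" by (simp add: algebra_simps)
      moreover have "2 * D \<le> M * D" using True D0 by (simp add: mult_right_mono)
      ultimately show "C < M" by (simp add: D_def)
    qed
    ultimately show ?thesis
      using True bound_iff by (auto simp: D_def[symmetric])
  next
    case False
    have "C < M \<Longrightarrow> D < 1 \<and> B < M * (1 - D)"
    proof -
      assume "C < M"
      moreover have "M * D \<le> 2 * D" using False D0 by (simp add: mult_right_mono)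
      ultimately have "B < M - M * D" by (simp add: D_def)
      then show ?thesis using \<open>C < M\<close> False B by (simp add: D_def algebra_simps)
    qed
    then show ?thesis
      using False M bound_iff by (auto simp: D_def[symmetric] field_simps)
  qed
qed

lemma log_threshold_iff:
  fixes y R :: real and m :: nat
  assumes "0 < y" and "1 \<le> m"
  shows "(1 / real m) * log 2 y < R \<longleftrightarrow> y < (2 powr R) ^ m"
proof -
  have "(1 / real m) * log 2 y < R \<longleftrightarrow> log 2 y < real m * R"
    using assms(2) by (simp add: field_simps)
  also have "\<dots> \<longleftrightarrow> y < 2 powr (real m * R)"
    using assms(1) by (simp add: log_less_iff)
  finally show ?thesis by (simp add: powr_power mult.commute)
qed

theorem mainTheorem10:
  fixes a e R :: real and m :: nat
  assumes "e \<ge> 0" and "\<bar>a\<bar> - e > 1" and "m \<ge> 1" and "R \<ge> 0"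
  shows "(kappa a e m R)\<^sup>2 < 1 \<longleftrightarrow>
     ((delta_plus a e m + delta_minus a e m) / 2 < 1 \<and>
      R > max (log 2 (\<bar>a\<bar> + e))
              ((1 / real m) * log 2 ((\<bar>a\<bar> ^ m - delta_minus a e m)
                 / (1 - (delta_plus a e m + delta_minus a e m) / 2))))"
proof -
  define b c M where "b = \<bar>a\<bar> - e" and "c = \<bar>a\<bar> + e" and "M = (2 powr R) ^ m"
  have bm: "1 \<le> b ^ m" and bcm: "b ^ m \<le> c ^ m"
    using assms by (auto simp: b_def c_def one_le_power intro!: power_mono)
  have M1: "1 \<le> M"
    using assms(4) by (simp add: M_def one_le_power ge_one_powr_ge_zero)
  have deltas: "(delta_plus a e m + delta_minus a e m) / 2 = (c ^ m - b ^ m) / 2"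
    "\<bar>a\<bar> ^ m - delta_minus a e m = b ^ m"
    by (simp_all add: delta_plus_def delta_minus_def b_def c_def)
  have kappa_eq: "kappa a e m R = (if 2 \<le> M then b ^ m / M + (c ^ m - b ^ m) / 2 else c ^ m / M)"
    using kappa_shape_piecewise[OF M1, of "\<bar>a\<bar> ^ m" "c ^ m" "b ^ m"]
    by (simp add: kappa_def Let_def M_def delta_plus_def delta_minus_def b_def c_def)
  have "0 \<le> kappa a e m R"
    using bm bcm M1 by (simp add: kappa_eq)
  then have "(kappa a e m R)\<^sup>2 < 1 \<longleftrightarrow> kappa a e m R < 1"
    by (metis abs_of_nonneg abs_square_less_1)
  moreover have "log 2 c < R \<longleftrightarrow> c ^ m < M"
  proof -
    have "0 < c" using assms(1,2) by (simp add: c_def)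
    then have "log 2 c = (1 / real m) * log 2 (c ^ m)"
      using assms(3) by (simp add: log_nat_power)
    then show ?thesis
      using log_threshold_iff[of "c ^ m" m R] \<open>0 < c\<close> assms(3) by (simp add: M_def)
  qed
  ultimately show ?thesis
    using piecewise_less_one_iff[of "b ^ m" "c ^ m" M] log_threshold_iff[of _ m R] bm bcm M1 assms(3)
    unfolding deltas c_def[symmetric] kappa_eq M_def[symmetric]
    by (auto simp: M_def)
qed

end
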